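(* Let $G$ be a Frattini-injective pro-$p$ group and let $H$ be a finitely generated subgroup of $G$. Then $N_G(H) = N_G(\Phi(H))$. In particular, $H$ is normal in $G$ if and only if $\Phi(H)$ is normal in $G$.
   Context: $p$ is a prime; subgroups are closed. $\Phi(H)$ is the Frattini subgroup and $N_G(\cdot)$ the normalizer. A pro-$p$ group $G$ is Frattini-injective if distinct finitely generated subgroups of $G$ have distinct Frattini subgroups. *)

theory Defs
  imports "HOL-Analysis.Analysis" "HOL-Algebra.Algebra"
begin

definition topological_group :: "('a, 'b) monoid_scheme \<Rightarrow> 'a topology \<Rightarrow> bool" where
  "topological_group G T \<longleftrightarrow> group G \<and> topspace T = carrier G
     \<and> continuous_map (prod_topology T T) T (\<lambda>(x, y). x \<otimes>\<^bsub>G\<^esub> y)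
     \<and> continuous_map T T (\<lambda>x. inv\<^bsub>G\<^esub> x)"

definition profinite_group :: "('a, 'b) monoid_scheme \<Rightarrow> 'a topology \<Rightarrow> bool" where
  "profinite_group G T \<longleftrightarrow> topological_group G T \<and> compact_space T \<and> Hausdorff_space T
     \<and> (\<forall>S. connectedin T S \<longrightarrow> S = {} \<or> (\<exists>x. S = {x}))"

text \<open>Pro-p group: profinite group all of whose continuous finite quotients are p-groups,
i.e. every open normal subgroup has p-power index.\<close>
definition pro_p_group :: "nat \<Rightarrow> ('a, 'b) monoid_scheme \<Rightarrow> 'a topology \<Rightarrow> bool" where
  "pro_p_group p G T \<longleftrightarrow> Factorial_Ring.prime p \<and> profinite_group G T
     \<and> (\<forall>N. N \<lhd> G \<and> openin T N \<longrightarrow> (\<exists>k. card (rcosets\<^bsub>G\<^esub> N) = p ^ k))"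

definition closed_subgroup :: "('a, 'b) monoid_scheme \<Rightarrow> 'a topology \<Rightarrow> 'a set \<Rightarrow> bool" where
  "closed_subgroup G T H \<longleftrightarrow> subgroup H G \<and> closedin T H"

definition fg_subgroup :: "('a, 'b) monoid_scheme \<Rightarrow> 'a topology \<Rightarrow> 'a set \<Rightarrow> bool" where
  "fg_subgroup G T H \<longleftrightarrow> closed_subgroup G T H
     \<and> (\<exists>S. finite S \<and> S \<subseteq> H \<and> H = T closure_of (generate G S))"

definition maximal_open_subgroup ::
  "('a, 'b) monoid_scheme \<Rightarrow> 'a topology \<Rightarrow> 'a set \<Rightarrow> 'a set \<Rightarrow> bool" where
  "maximal_open_subgroup G T H K \<longleftrightarrow> subgroup K G \<and> K \<subset> H \<and> openin (subtopology T H) K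
     \<and> (\<forall>L. subgroup L G \<and> openin (subtopology T H) L \<and> K \<subseteq> L \<and> L \<subseteq> H \<longrightarrow> L = K \<or> L = H)"

text \<open>Frattini subgroup: intersection of all maximal open subgroups of H (H if there are none).\<close>
definition frattini :: "('a, 'b) monoid_scheme \<Rightarrow> 'a topology \<Rightarrow> 'a set \<Rightarrow> 'a set" where
  "frattini G T H = H \<inter> \<Inter> {K. maximal_open_subgroup G T H K}"

definition frattini_injective :: "('a, 'b) monoid_scheme \<Rightarrow> 'a topology \<Rightarrow> bool" where
  "frattini_injective G T \<longleftrightarrow>
     (\<forall>H1 H2. fg_subgroup G T H1 \<and> fg_subgroup G T H2 \<and> H1 \<noteq> H2
        \<longrightarrow> frattini G T H1 \<noteq> frattini G T H2)"

end

theory Submission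
  imports Defs
begin

text \<open>Conjugation by an element g of G is a group automorphism and a homeomorphism. Such maps
send finitely generated closed subgroups to finitely generated closed subgroups and maximal open
subgroups of H to maximal open subgroups of its image, so \<open>\<Phi>(gHg\<^sup>-\<^sup>1) = g\<Phi>(H)g\<^sup>-\<^sup>1\<close>. Thus g
normalises \<open>\<Phi>(H)\<close> iff \<open>\<Phi>(gHg\<^sup>-\<^sup>1) = \<Phi>(H)\<close>, which by Frattini-injectivity happens iff
\<open>gHg\<^sup>-\<^sup>1 = H\<close>.\<close>

definition conjugation :: "('a, 'b) monoid_scheme \<Rightarrow> 'a \<Rightarrow> 'a \<Rightarrow> 'a" where
  "conjugation G g x = g \<otimes>\<^bsub>G\<^esub> x \<otimes>\<^bsub>G\<^esub> inv\<^bsub>G\<^esub> g"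

context group
begin

lemma conjugation_closed:
  "g \<in> carrier G \<Longrightarrow> x \<in> carrier G \<Longrightarrow> conjugation G g x \<in> carrier G"
  by (simp add: conjugation_def)

lemma conjugation_inv_conjugation:
  "g \<in> carrier G \<Longrightarrow> x \<in> carrier G \<Longrightarrow> conjugation G (inv g) (conjugation G g x) = x"
  by (simp add: conjugation_def m_assoc flip: m_assoc[of "inv g" g])

lemma conjugation_conjugation_inv:
  "g \<in> carrier G \<Longrightarrow> x \<in> carrier G \<Longrightarrow> conjugation G g (conjugation G (inv g) x) = x"
  using conjugation_inv_conjugation[of "inv g" x] by simp

lemma conjugation_iso:
  assumes "g \<in> carrier G"
  shows "conjugation G g \<in> iso G G"
proof (rule isoI)
  show "conjugation G g \<in> hom G G"
    using assms by (intro homI)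
      (simp_all add: conjugation_closed conjugation_def m_assoc flip: m_assoc[of "inv g"])
  show "bij_betw (conjugation G g) (carrier G) (carrier G)"
    using assms by (intro bij_betw_byWitness[where f' = "conjugation G (inv g)"])
      (auto simp: conjugation_inv_conjugation conjugation_conjugation_inv conjugation_closed)
qed

lemma normalizer_iff_conjugation:
  assumes "A \<subseteq> carrier G"
  shows "g \<in> normalizer G A \<longleftrightarrow> g \<in> carrier G \<and> conjugation G g ` A = A"
proof -
  have "g <#\<^bsub>G\<^esub> A #>\<^bsub>G\<^esub> inv g = conjugation G g ` A"
    unfolding conjugation_def l_coset_def r_coset_def by auto
  then show ?thesis
    using assms unfolding normalizer_def stabilizer_def by auto
qed

lemma normal_iff_normalizer_eq_carrier:
  assumes A: "subgroup A G"
  shows "A \<lhd> G \<longleftrightarrow> normalizer G A = carrier G"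
proof -
  have A_carrier: "A \<subseteq> carrier G"
    using A by (rule subgroup.subset)
  have "A \<lhd> G \<longleftrightarrow> (\<forall>g \<in> carrier G. conjugation G g ` A \<subseteq> A)"
    using A by (auto simp: normal_inv_iff conjugation_def)
  also have "\<dots> \<longleftrightarrow> (\<forall>g \<in> carrier G. conjugation G g ` A = A)"
  proof (intro iffI ballI)
    fix g assume stable: "\<forall>g \<in> carrier G. conjugation G g ` A \<subseteq> A" and g: "g \<in> carrier G"
    have "A = conjugation G g ` conjugation G (inv g) ` A"
      using A_carrier g by (force simp: image_image conjugation_conjugation_inv)
    also have "\<dots> \<subseteq> conjugation G g ` A"
      using stable g by (intro image_mono) simp
    finally show "conjugation G g ` A = A"
      using stable g by blast
  qed auto
  also have "\<dots> \<longleftrightarrow> carrier G \<subseteq> normalizer G A"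
    using normalizer_iff_conjugation[OF A_carrier] by blast
  finally show ?thesis
    using normalizer_iff_conjugation[OF A_carrier] by blast
qed

end

lemma continuous_map_conjugation:
  assumes G: "topological_group G T" and g: "g \<in> carrier G"
  shows "continuous_map T T (conjugation G g)"
proof -
  let ?mult = "\<lambda>(x, y). x \<otimes>\<^bsub>G\<^esub> y"
  have mult: "continuous_map (prod_topology T T) T ?mult" and "group G"
    and "topspace T = carrier G"
    using G by (auto simp: topological_group_def)
  then have in_topspace: "g \<in> topspace T" "inv\<^bsub>G\<^esub> g \<in> topspace T"
    using g by auto
  have left: "continuous_map T T (\<lambda>x. ?mult (g, x))"
    using continuous_map_compose[OF continuous_map_pairedI[OF
        continuous_map_const[THEN iffD2] continuous_map_id] mult] in_topspace
    by (simp add: o_def)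
  have "continuous_map T T (\<lambda>x. ?mult (?mult (g, x), inv\<^bsub>G\<^esub> g))"
    using continuous_map_compose[OF continuous_map_pairedI[OF
        left continuous_map_const[THEN iffD2]] mult] in_topspace
    by (simp add: o_def)
  then show ?thesis
    by (simp add: conjugation_def[abs_def])
qed

lemma frattini_eq_Inter: "frattini G T H = \<Inter> (insert H {K. maximal_open_subgroup G T H K})"
  by (auto simp: frattini_def)

lemma (in group) frattini_subgroup: "subgroup H G \<Longrightarrow> subgroup (frattini G T H) G"
  unfolding frattini_eq_Inter by (rule subgroups_Inter) (auto simp: maximal_open_subgroup_def)

locale topological_group_automorphism =
  fixes G :: "('a, 'b) monoid_scheme" and T :: "'a topology" and f :: "'a \<Rightarrow> 'a"
  assumes topological: "topological_group G T"
    and automorphism: "f \<in> iso G G"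
    and homeomorphism: "homeomorphic_map T T f"

context topological_group_automorphism
begin

lemma group: "group G" and topspace: "topspace T = carrier G"
  using topological by (auto simp: topological_group_def)

lemma hom: "f \<in> hom G G" and bij: "bij_betw f (carrier G) (carrier G)"
  using automorphism by (auto simp: iso_def)

lemma inj: "inj_on f (carrier G)" and image_carrier: "f ` carrier G = carrier G"
  using bij by (auto simp: bij_betw_def)

lemma image_subset_carrier: "A \<subseteq> carrier G \<Longrightarrow> f ` A \<subseteq> carrier G"
  using image_carrier by blast

lemma inv_image_image: "A \<subseteq> carrier G \<Longrightarrow> inv_into (carrier G) f ` f ` A = A"
  using inj by simp

lemma image_inv_image: "A \<subseteq> carrier G \<Longrightarrow> f ` inv_into (carrier G) f ` A = A"
  using image_carrier by (rule image_inv_into_cancel)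

lemma inverse_automorphism: "topological_group_automorphism G T (inv_into (carrier G) f)"
proof
  show "topological_group G T" by (fact topological)
  show "inv_into (carrier G) f \<in> iso G G"
    using automorphism by (rule group.iso_set_sym[OF group])
  obtain f' where f': "homeomorphic_maps T T f f'"
    using homeomorphism homeomorphic_map_maps by blast
  have f'_eq: "f' y = inv_into (carrier G) f y" if "y \<in> topspace T" for y
  proof -
    have "f' y \<in> carrier G" "f (f' y) = y"
      using f' that unfolding homeomorphic_maps_def continuous_map_def topspace by auto
    then show ?thesis
      using inv_into_f_f[OF inj] by metis
  qed
  have "homeomorphic_maps T T f (inv_into (carrier G) f)"
    by (rule homeomorphic_maps_eq[OF f' refl f'_eq])
  then show "homeomorphic_map T T (inv_into (carrier G) f)"
    by (rule homeomorphic_maps_imp_map[OF homeomorphic_maps_sym[THEN iffD1]])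
qed

lemma image_subgroup: "subgroup K G \<Longrightarrow> subgroup (f ` K) G"
  using group hom
  by (simp add: group_hom.subgroup_img_is_subgroup group_hom_axioms_def group_hom_def)

lemma image_closure_of_generate:
  assumes "S \<subseteq> carrier G"
  shows "f ` (T closure_of generate G S) = T closure_of generate G (f ` S)"
proof -
  have "generate G S \<subseteq> topspace T"
    using assms group.generate_incl[OF group] topspace by blast
  then have "f ` (T closure_of generate G S) = T closure_of (f ` generate G S)"
    by (simp add: homeomorphic_map_closure_of[OF homeomorphism])
  also have "f ` generate G S = generate G (f ` S)"
    using group hom assms by (simp add: group_hom.generate_img group_hom_axioms_def group_hom_def)
  finally show ?thesis .
qed

lemma image_fg_subgroup:
  assumes "fg_subgroup G T H"
  shows "fg_subgroup G T (f ` H)"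
proof -
  obtain S where S: "finite S" "S \<subseteq> H" "H = T closure_of generate G S"
    and H: "subgroup H G" "closedin T H"
    using assms by (auto simp: fg_subgroup_def closed_subgroup_def)
  have "S \<subseteq> carrier G"
    using S(2) subgroup.subset[OF H(1)] by blast
  then have "f ` H = T closure_of generate G (f ` S)"
    using S(3) image_closure_of_generate by simp
  moreover have "closedin T (f ` H)"
    using homeomorphic_map_closedness[OF homeomorphism] H subgroup.subset[OF H(1)] topspace
    by simp
  ultimately show ?thesis
    using S H image_subgroup
    unfolding fg_subgroup_def closed_subgroup_def by blast
qed

lemma image_openin_subtopology:
  assumes "H \<subseteq> carrier G" and "openin (subtopology T H) K"
  shows "openin (subtopology T (f ` H)) (f ` K)"
proof -
  have "homeomorphic_map (subtopology T H) (subtopology T (f ` H)) f"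
    using assms(1) homeomorphism topspace
    by (simp add: homeomorphic_map_subtopologies Int_absorb1 image_subset_carrier)
  then show ?thesis
    using assms(2) homeomorphic_map_openness openin_subset by blast
qed

lemma image_maximal_open_subgroup:
  assumes H: "H \<subseteq> carrier G" and K: "maximal_open_subgroup G T H K"
  shows "maximal_open_subgroup G T (f ` H) (f ` K)"
proof -
  interpret inverse: topological_group_automorphism G T "inv_into (carrier G) f"
    by (rule inverse_automorphism)
  let ?g = "inv_into (carrier G) f"
  have K_open: "subgroup K G" "K \<subset> H" "openin (subtopology T H) K"
    and K_max: "\<And>L. subgroup L G \<Longrightarrow> openin (subtopology T H) L \<Longrightarrow> K \<subseteq> L \<Longrightarrow> L \<subseteq> H
      \<Longrightarrow> L = K \<or> L = H"
    using K unfolding maximal_open_subgroup_def by blast+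
  have fH: "f ` H \<subseteq> carrier G"
    using H by (rule image_subset_carrier)
  have K_carrier: "K \<subseteq> carrier G"
    using K_open(2) H by blast
  have maximal: "L = f ` K \<or> L = f ` H"
    if L: "subgroup L G" "openin (subtopology T (f ` H)) L" "f ` K \<subseteq> L" "L \<subseteq> f ` H" for L
  proof -
    have "?g ` L = K \<or> ?g ` L = H"
    proof (rule K_max)
      show "subgroup (?g ` L) G"
        using L(1) by (rule inverse.image_subgroup)
      show "openin (subtopology T H) (?g ` L)"
        using inverse.image_openin_subtopology[OF fH L(2)] by (simp only: inv_image_image[OF H])
      show "K \<subseteq> ?g ` L"
        using image_mono[OF L(3), of ?g] by (simp only: inv_image_image[OF K_carrier])
      show "?g ` L \<subseteq> H"
        using image_mono[OF L(4), of ?g] by (simp only: inv_image_image[OF H])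
    qed
    moreover have "f ` ?g ` L = L"
      using L(4) fH by (intro image_inv_image) blast
    ultimately show ?thesis
      by (elim disjE) simp_all
  qed
  show ?thesis
    unfolding maximal_open_subgroup_def
  proof (intro conjI allI impI)
    show "subgroup (f ` K) G"
      using K_open(1) by (rule image_subgroup)
    show "f ` K \<subset> f ` H"
      using image_strict_mono[OF inj_on_subset[OF inj H] K_open(2)] .
    show "openin (subtopology T (f ` H)) (f ` K)"
      using H K_open(3) by (rule image_openin_subtopology)
    show "L = f ` K \<or> L = f ` H"
      if "subgroup L G \<and> openin (subtopology T (f ` H)) L \<and> f ` K \<subseteq> L \<and> L \<subseteq> f ` H" for L
      using maximal that by blast
  qed
qed

lemma frattini_image:
  assumes H: "H \<subseteq> carrier G"
  shows "frattini G T (f ` H) = f ` frattini G T H"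
proof -
  interpret inverse: topological_group_automorphism G T "inv_into (carrier G) f"
    by (rule inverse_automorphism)
  let ?g = "inv_into (carrier G) f"
  let ?\<K> = "{K. maximal_open_subgroup G T H K}"
  have maximal_image: "{K'. maximal_open_subgroup G T (f ` H) K'} = (`) f ` ?\<K>"
  proof (intro equalityI subsetI)
    fix K' assume "K' \<in> {K'. maximal_open_subgroup G T (f ` H) K'}"
    then have K': "maximal_open_subgroup G T (f ` H) K'" by simp
    then have "maximal_open_subgroup G T H (?g ` K')"
      using inverse.image_maximal_open_subgroup[OF image_subset_carrier[OF H] K']
      by (simp only: inv_image_image[OF H])
    moreover have "K' \<subseteq> carrier G"
      using K' subgroup.subset unfolding maximal_open_subgroup_def by blast
    then have "K' = f ` ?g ` K'"
      by (simp only: image_inv_image)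
    ultimately show "K' \<in> (`) f ` ?\<K>"
      by blast
  qed (auto intro: image_maximal_open_subgroup[OF H])
  have "\<forall>K \<in> insert H ?\<K>. K \<subseteq> carrier G"
    using H by (auto simp: maximal_open_subgroup_def)
  then have "f ` \<Inter> (insert H ?\<K>) = (\<Inter>K \<in> insert H ?\<K>. f ` K)"
    using image_INT[OF inj _ insertI1, where B = "\<lambda>K. K"] by (simp only: image_ident)
  then show ?thesis
    by (simp only: frattini_eq_Inter maximal_image image_insert)
qed

end

lemma conjugation_topological_group_automorphism:
  assumes G: "topological_group G T" and g: "g \<in> carrier G"
  shows "topological_group_automorphism G T (conjugation G g)"
proof
  have grp: "group G" and topspace: "topspace T = carrier G"
    using G by (auto simp: topological_group_def)
  show "topological_group G T" by (fact G)
  show "conjugation G g \<in> iso G G"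
    using grp g by (rule group.conjugation_iso)
  have "homeomorphic_maps T T (conjugation G g) (conjugation G (inv\<^bsub>G\<^esub> g))"
    unfolding homeomorphic_maps_def topspace
    using G g grp by (simp add: continuous_map_conjugation group.conjugation_inv_conjugation
        group.conjugation_conjugation_inv)
  then show "homeomorphic_map T T (conjugation G g)"
    by (rule homeomorphic_maps_imp_map)
qed

lemma normalizer_eq_normalizer_frattini:
  assumes G: "topological_group G T" and injective: "frattini_injective G T"
    and H: "fg_subgroup G T H"
  shows "normalizer G H = normalizer G (frattini G T H)"
proof -
  have group: "group G"
    using G by (simp add: topological_group_def)
  have H_carrier: "H \<subseteq> carrier G"
    using H by (auto simp: fg_subgroup_def closed_subgroup_def dest: subgroup.subset)
  then have frattini_carrier: "frattini G T H \<subseteq> carrier G"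
    by (auto simp: frattini_def)
  have frattini_inj: "H' = H" if "fg_subgroup G T H'" "frattini G T H' = frattini G T H" for H'
    using injective that H unfolding frattini_injective_def by blast
  have stable_iff:
    "conjugation G g ` H = H \<longleftrightarrow> conjugation G g ` frattini G T H = frattini G T H"
    if g: "g \<in> carrier G" for g
  proof -
    interpret conjugation: topological_group_automorphism G T "conjugation G g"
      using G g by (rule conjugation_topological_group_automorphism)
    have frattini_conjugate:
      "frattini G T (conjugation G g ` H) = conjugation G g ` frattini G T H"
      using H_carrier by (rule conjugation.frattini_image)
    show ?thesis
    proof
      assume "conjugation G g ` H = H"
      then show "conjugation G g ` frattini G T H = frattini G T H"
        using frattini_conjugate by (simp only:)
    next
      assume "conjugation G g ` frattini G T H = frattini G T H"
      then have "frattini G T (conjugation G g ` H) = frattini G T H"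
        using frattini_conjugate by (simp only:)
      then show "conjugation G g ` H = H"
        using conjugation.image_fg_subgroup[OF H] frattini_inj by blast
    qed
  qed
  show ?thesis
  proof (rule Set.set_eqI)
    fix g
    show "g \<in> normalizer G H \<longleftrightarrow> g \<in> normalizer G (frattini G T H)"
      unfolding group.normalizer_iff_conjugation[OF group H_carrier]
        group.normalizer_iff_conjugation[OF group frattini_carrier]
      using stable_iff by blast
  qed
qed

theorem mainTheorem14:
  fixes p :: nat and G :: "('a, 'b) monoid_scheme" and T :: "'a topology" and H :: "'a set"
  assumes "pro_p_group p G T"
    and "frattini_injective G T"
    and "fg_subgroup G T H"
  shows "normalizer G H = normalizer G (frattini G T H)
         \<and> (H \<lhd> G \<longleftrightarrow> frattini G T H \<lhd> G)"
proof -
  have G: "topological_group G T"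
    using assms(1) unfolding pro_p_group_def profinite_group_def by blast
  then interpret group G
    by (simp add: topological_group_def)
  have H: "subgroup H G"
    using assms(3) by (simp add: fg_subgroup_def closed_subgroup_def)
  have normalizer: "normalizer G H = normalizer G (frattini G T H)"
    using G assms(2,3) by (rule normalizer_eq_normalizer_frattini)
  moreover have "H \<lhd> G \<longleftrightarrow> frattini G T H \<lhd> G"
    using normal_iff_normalizer_eq_carrier[OF H]
      normal_iff_normalizer_eq_carrier[OF frattini_subgroup[OF H]] normalizer by simp
  ultimately show ?thesis ..
qed

end
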